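(* Let $g\in\mathcal G^{\mathrm{dyad}}$. (1) For $d\ge\deg(g)$ and a permutation $\pi$ of $\{1,\dots,2^d\}$ with $g=g_\pi$, the map $T_g:\mathcal H^{X,d}\to\mathcal H^{X,d}$, $T_gf(X_{I^d_1},\dots,X_{I^d_{2^d}}):=f(X_{I^d_{\pi(1)}},\dots,X_{I^d_{\pi(2^d)}})$, is well defined: if $f_1(X_{I^d_1},\dots,X_{I^d_{2^d}})=f_2(X_{I^d_1},\dots,X_{I^d_{2^d}})$ a.s., then $f_1(X_{I^d_{\pi(1)}},\dots)=f_2(X_{I^d_{\pi(1)}},\dots)$ a.s. (2) For $e\ge d\ge\deg(g)$ and $g=g_{\pi_e}=g_{\pi_d}$ with $\pi_e,\pi_d$ permutations of $\{1,\dots,2^e\}$, $\{1,\dots,2^d\}$ respectively, the restriction of $T_{g_{\pi_e}}$ (defined on $\mathcal H^{X,e}$) to $\mathcal H^{X,d}$ equals $T_{g_{\pi_d}}$. (3) For $F\in\mathcal H^{X,d}$ with $d\ge\deg(g)$, $F$ and $T_gF$ have the same distribution; in particular $T_g$ is a linear isometry with respect to the $L_2(\mathcal F^X)$-norm.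
   Context: $X=(X_t)_{t\in[0,1]}$ is a Lévy process with càdlàg paths and $X_0\equiv0$ on a complete probability space; $\mathcal F^X$ is $\sigma(X_t:t\in[0,1])$ augmented by null sets; $X_{(a,b]}:=X_b-X_a$. Dyadic intervals $I^d_k=((k-1)2^{-d},k2^{-d}]$. $\mathcal H^{X,d}=\{f(X_{I^d_1},\dots,X_{I^d_{2^d}}):f\text{ bounded continuous on }\mathbb R^{2^d}\}\subseteq L_2(\mathcal F^X)$ (as a.s.-equivalence classes). For a permutation $\pi$ of $\{1,\dots,2^d\}$, $g_\pi:(0,1]\to(0,1]$ is $g_\pi(t)=\pi(k)2^{-d}-(k2^{-d}-t)$ for $t\in I^d_k$; $\mathcal G^{\mathrm{dyad}}$ is the set of all $g_\pi$, $d\ge0$; $\deg(g)$ is the least $d$ such that $g=g_\pi$ for some permutation $\pi$ of $\{1,\dots,2^d\}$. *)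

theory Defs
  imports "HOL-Probability.Probability"
begin

definition measure_complete :: "'a measure \<Rightarrow> bool" where
  "measure_complete M \<longleftrightarrow> (\<forall>A B. A \<in> null_sets M \<longrightarrow> B \<subseteq> A \<longrightarrow> B \<in> sets M)"

text \<open>A real-valued Levy process on [0,1] with cadlag paths and X_0 = 0 (values of X t
  for t outside [0,1] are irrelevant).\<close>
definition levy_process :: "'a measure \<Rightarrow> (real \<Rightarrow> 'a \<Rightarrow> real) \<Rightarrow> bool" where
  "levy_process M X \<longleftrightarrow>
     prob_space M \<and>
     (\<forall>t\<in>{0..1}. X t \<in> borel_measurable M) \<and>
     (\<forall>\<omega>\<in>space M. X 0 \<omega> = 0) \<and>
     (\<forall>\<omega>\<in>space M. (\<forall>t\<in>{0..<1}. ((\<lambda>s. X s \<omega>) \<longlongrightarrow> X t \<omega>) (at_right t)) \<and>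
                   (\<forall>t\<in>{0<..1}. \<exists>l. ((\<lambda>s. X s \<omega>) \<longlongrightarrow> l) (at_left t))) \<and>
     (\<forall>(n::nat) (t::nat \<Rightarrow> real). (\<forall>i\<le>n. t i \<in> {0..1}) \<longrightarrow> (\<forall>i<n. t i < t (Suc i)) \<longrightarrow>
         prob_space.indep_vars M (\<lambda>_. borel) (\<lambda>i \<omega>. X (t (Suc i)) \<omega> - X (t i) \<omega>) {..<n}) \<and>
     (\<forall>s t. 0 \<le> s \<longrightarrow> s \<le> t \<longrightarrow> t \<le> 1 \<longrightarrow>
         distr M borel (\<lambda>\<omega>. X t \<omega> - X s \<omega>) = distr M borel (X (t - s))) \<and>
     (\<forall>t\<in>{0..1}. \<forall>e>0. ((\<lambda>s. measure M {\<omega>\<in>space M. \<bar>X s \<omega> - X t \<omega>\<bar> > e}) \<longlongrightarrow> 0)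
         (at t within {0..1}))"

text \<open>R^(2^d) is represented as the subspace of nat \<Rightarrow> real (product topology) of vectors
  supported on the index set {1..2^d}.\<close>
definition dyad_dom :: "nat \<Rightarrow> (nat \<Rightarrow> real) set" where
  "dyad_dom d = {x. \<forall>i. i \<notin> {1..2^d} \<longrightarrow> x i = 0}"

definition bcont :: "nat \<Rightarrow> ((nat \<Rightarrow> real) \<Rightarrow> real) \<Rightarrow> bool" where
  "bcont d f \<longleftrightarrow> continuous_on (dyad_dom d) f \<and> bounded (f ` dyad_dom d)"

definition dyad_incr :: "(real \<Rightarrow> 'a \<Rightarrow> real) \<Rightarrow> nat \<Rightarrow> 'a \<Rightarrow> nat \<Rightarrow> real" where
  "dyad_incr X d \<omega> = (\<lambda>k. if k \<in> {1..2^d}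
      then X (real k / 2^d) \<omega> - X ((real k - 1) / 2^d) \<omega> else 0)"

text \<open>The dyadic interval-exchange map g_pi on (0,1]; extended by the identity outside (0,1]
  so that equality of such maps as HOL functions is equality on (0,1].\<close>
definition g_perm :: "nat \<Rightarrow> (nat \<Rightarrow> nat) \<Rightarrow> real \<Rightarrow> real" where
  "g_perm d \<pi> t = (if t \<in> {0<..1} then
      (let k = nat \<lceil>t * 2^d\<rceil> in real (\<pi> k) / 2^d - (real k / 2^d - t)) else t)"

definition G_dyad :: "(real \<Rightarrow> real) set" where
  "G_dyad = {g. \<exists>d \<pi>. \<pi> permutes {1..(2::nat)^d} \<and> g = g_perm d \<pi>}"

definition deg :: "(real \<Rightarrow> real) \<Rightarrow> nat" where
  "deg g = (LEAST d. \<exists>\<pi>. \<pi> permutes {1..(2::nat)^d} \<and> g = g_perm d \<pi>)"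

end

theory Submission
  imports Defs
begin

text \<open>
  The increments of X over the dyadic intervals of level d are independent and identically
  distributed, so the law of the increment vector is a product of equal factors and is invariant
  under any permutation of the coordinates. This gives (3) directly, and (1) because an almost sure
  identity between two functions of a random vector only depends on its law. For (2), the level-d
  increments are block sums of the level-e increments; since g_{\<pi>_e} = g_{\<pi>_d}, the permutation
  \<pi>_e moves the level-e blocks exactly as \<pi>_d moves the level-d intervals, so the block sums
  commute with the permutations and (2) becomes an instance of the argument for (1) at level e.
\<close>

lemma (in prob_space) indep_sets_reindex:
  assumes inj: "inj_on h J" and ind: "indep_sets F (h ` J)"
  shows "indep_sets (\<lambda>j. F (h j)) J"
  unfolding indep_sets_def
proof (intro conjI ballI allI impI)
  fix j assume "j \<in> J" then show "F (h j) \<subseteq> events" using ind by (auto simp: indep_sets_def)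
next
  fix K A assume K: "K \<subseteq> J" "K \<noteq> {}" "finite K" and A: "A \<in> Pi K (\<lambda>j. F (h j))"
  define A' where "A' i = A (the_inv_into K h i)" for i
  have injK: "inj_on h K" using inj K by (meson inj_on_subset)
  have A'h: "A' (h j) = A j" if "j \<in> K" for j
    using that injK by (simp add: A'_def the_inv_into_f_f)
  have "A' \<in> Pi (h ` K) F" using A A'h by auto
  moreover have "h ` K \<subseteq> h ` J" "h ` K \<noteq> {}" "finite (h ` K)" using K by auto
  ultimately have "prob (\<Inter>i\<in>h ` K. A' i) = (\<Prod>i\<in>h ` K. prob (A' i))"
    using ind unfolding indep_sets_def by blast
  moreover have "(\<Inter>i\<in>h ` K. A' i) = (\<Inter>j\<in>K. A j)" using A'h by auto
  moreover have "(\<Prod>i\<in>h ` K. prob (A' i)) = (\<Prod>j\<in>K. prob (A j))"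
    using injK A'h by (simp add: prod.reindex)
  ultimately show "prob (\<Inter>j\<in>K. A j) = (\<Prod>j\<in>K. prob (A j))" by simp
qed

lemma (in prob_space) indep_vars_reindex:
  assumes inj: "inj_on h J" and ind: "indep_vars M' X (h ` J)"
  shows "indep_vars (\<lambda>j. M' (h j)) (\<lambda>j. X (h j)) J"
  using ind indep_sets_reindex[OF inj, of "\<lambda>i. {X i -` A \<inter> space M | A. A \<in> sets (M' i)}"]
  unfolding indep_vars_def2 by auto

lemma AE_eq_transfer_distr:
  fixes Y1 Y2 :: "'a \<Rightarrow> 'b::topological_space" and h1 h2 :: "'b \<Rightarrow> real"
  assumes D: "distr M borel Y1 = distr M borel Y2"
    and [measurable]: "Y1 \<in> borel_measurable M" "Y2 \<in> borel_measurable M"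
      "h1 \<in> borel_measurable borel" "h2 \<in> borel_measurable borel"
    and AE: "AE \<omega> in M. h1 (Y1 \<omega>) = h2 (Y1 \<omega>)"
  shows "AE \<omega> in M. h1 (Y2 \<omega>) = h2 (Y2 \<omega>)"
proof -
  have P: "{x \<in> space borel. h1 x = h2 x} \<in> sets borel" by measurable
  have "AE x in distr M borel Y1. h1 x = h2 x" using AE by (subst AE_distr_iff) (auto intro: P)
  then have "AE x in distr M borel Y2. h1 x = h2 x" unfolding D .
  then show ?thesis by (subst (asm) AE_distr_iff) (auto intro: P)
qed

lemma integral_square_eq_if_distr_eq:
  fixes F G :: "'a \<Rightarrow> real"
  assumes D: "distr M borel F = distr M borel G"
    and F: "F \<in> borel_measurable M" and G: "G \<in> borel_measurable M"
  shows "(\<integral>\<omega>. (F \<omega>)\<^sup>2 \<partial>M) = (\<integral>\<omega>. (G \<omega>)\<^sup>2 \<partial>M)"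
proof -
  have sq: "(\<lambda>x::real. x\<^sup>2) \<in> borel_measurable borel" by measurable
  show ?thesis
    using integral_distr[OF F sq] integral_distr[OF G sq] D by simp
qed

section \<open>The dyadic increment vector and its law\<close>

lemma dyad_incr_in_dyad_dom: "dyad_incr X d \<omega> \<in> dyad_dom d"
  by (simp add: dyad_dom_def dyad_incr_def)

lemma permute_in_dyad_dom:
  assumes \<pi>: "\<pi> permutes {1..(2::nat)^d}" and x: "x \<in> dyad_dom d"
  shows "(\<lambda>k. x (\<pi> k)) \<in> dyad_dom d"
  using x permutes_not_in[OF \<pi>] by (auto simp: dyad_dom_def)

lemma dyadic_interval_endpoints:
  assumes "k \<in> {1..(2::nat)^d}"
  shows "0 \<le> (real k - 1) / 2^d" "(real k - 1) / 2^d \<le> real k / 2^d" "real k / 2^d \<le> 1"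
  using assms by (auto simp: divide_right_mono)

lemma dyad_incr_component_measurable:
  assumes levy: "levy_process M X"
  shows "(\<lambda>\<omega>. dyad_incr X d \<omega> k) \<in> borel_measurable M"
proof (cases "k \<in> {1..2^d}")
  case True
  have "\<forall>t\<in>{0..1}. X t \<in> borel_measurable M" using levy by (simp add: levy_process_def)
  moreover have "real k / 2^d \<in> {0..1}" "(real k - 1) / 2^d \<in> {0..1}"
    using dyadic_interval_endpoints[OF True] unfolding atLeastAtMost_iff by linarith+
  moreover have "(\<lambda>\<omega>. dyad_incr X d \<omega> k) = (\<lambda>\<omega>. X (real k / 2^d) \<omega> - X ((real k - 1) / 2^d) \<omega>)"
    using True by (simp add: dyad_incr_def)
  ultimately show ?thesis by (simp add: borel_measurable_diff)
qed (auto simp: dyad_incr_def)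

lemma dyad_incr_measurable:
  assumes levy: "levy_process M X"
  shows "dyad_incr X d \<in> borel_measurable M"
  by (rule measurable_coordinatewise_then_product) (rule dyad_incr_component_measurable[OF levy])

lemma permuted_dyad_incr_measurable:
  fixes \<pi> :: "nat \<Rightarrow> nat"
  assumes levy: "levy_process M X"
  shows "(\<lambda>\<omega> k. dyad_incr X d \<omega> (\<pi> k)) \<in> borel_measurable M"
  by (rule measurable_coordinatewise_then_product) (rule dyad_incr_component_measurable[OF levy])

lemma distr_dyad_incr_component:
  assumes levy: "levy_process M X" and k: "k \<in> {1..(2::nat)^d}"
  shows "distr M borel (\<lambda>\<omega>. dyad_incr X d \<omega> k) = distr M borel (X (1 / 2^d))"
proof -
  have "\<forall>s t. 0 \<le> s \<longrightarrow> s \<le> t \<longrightarrow> t \<le> 1 \<longrightarrow>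
      distr M borel (\<lambda>\<omega>. X t \<omega> - X s \<omega>) = distr M borel (X (t - s))"
    using levy by (simp add: levy_process_def)
  moreover note dyadic_interval_endpoints[OF k]
  moreover have "real k / 2^d - (real k - 1) / 2^d = 1 / (2::real)^d"
    by (simp add: diff_divide_distrib)
  ultimately show ?thesis using k by (simp add: dyad_incr_def)
qed

lemma indep_vars_permuted_dyad_incr:
  assumes levy: "levy_process M X" and \<pi>: "\<pi> permutes {1..(2::nat)^d}"
  shows "prob_space.indep_vars M (\<lambda>_. borel) (\<lambda>k \<omega>. dyad_incr X d \<omega> (\<pi> k)) {1..2^d}"
proof -
  interpret prob_space M using levy by (simp add: levy_process_def)
  let ?I = "{1..(2::nat)^d}" and ?h = "\<lambda>k. \<pi> k - 1"
  have "\<forall>(n::nat) (t::nat \<Rightarrow> real). (\<forall>i\<le>n. t i \<in> {0..1}) \<longrightarrow> (\<forall>i<n. t i < t (Suc i)) \<longrightarrow>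
      indep_vars (\<lambda>_. borel) (\<lambda>i \<omega>. X (t (Suc i)) \<omega> - X (t i) \<omega>) {..<n}"
    using levy by (simp add: levy_process_def)
  then have ind: "indep_vars (\<lambda>_. borel) (\<lambda>i \<omega>. X (real (Suc i) / 2^d) \<omega> - X (real i / 2^d) \<omega>) {..<2^d}"
    by (auto dest!: spec[of _ "2^d"] spec[of _ "\<lambda>i. real i / 2^d"] simp: divide_strict_right_mono)
  have "inj_on ?h ?I"
  proof (rule inj_onI)
    fix x y assume "x \<in> ?I" "y \<in> ?I" "\<pi> x - 1 = \<pi> y - 1"
    moreover have "\<pi> x \<in> ?I" "\<pi> y \<in> ?I" using calculation(1,2) permutes_in_image[OF \<pi>] by auto
    ultimately have "\<pi> x = \<pi> y" by auto
    then show "x = y" using permutes_inj[OF \<pi>] by (auto dest: injD)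
  qed
  moreover have "?h ` ?I = {..<2^d}"
  proof -
    have "?h ` ?I = (\<lambda>k. k - 1) ` (\<pi> ` ?I)" by auto
    also have "\<dots> = (\<lambda>k. k - 1) ` ?I" using permutes_image[OF \<pi>] by simp
    also have "\<dots> = {..<2^d}"
    proof (rule set_eqI, rule iffI)
      fix x assume "x \<in> {..<(2::nat)^d}" then show "x \<in> (\<lambda>k. k - 1) ` ?I"
        by (intro image_eqI[of _ _ "x+1"]) auto
    qed auto
    finally show ?thesis .
  qed
  ultimately have reindexed: "indep_vars (\<lambda>_. borel)
      (\<lambda>k \<omega>. X (real (Suc (?h k)) / 2^d) \<omega> - X (real (?h k) / 2^d) \<omega>) ?I"
    using indep_vars_reindex[of ?h ?I "\<lambda>_. borel"] ind by simp
  show ?thesis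
  proof (rule iffD1[OF indep_vars_cong reindexed])
    fix k assume "k \<in> ?I"
    then have "\<pi> k \<in> ?I" using permutes_in_image[OF \<pi>] by simp
    then show "(\<lambda>\<omega>. X (real (Suc (?h k)) / 2^d) \<omega> - X (real (?h k) / 2^d) \<omega>) = (\<lambda>\<omega>. dyad_incr X d \<omega> (\<pi> k))"
      by (simp add: dyad_incr_def)
  qed auto
qed

text \<open>A function that is only continuous on dyad_dom becomes continuous, hence Borel, on the
  whole product space after composing with this retraction.\<close>

definition dyad_proj :: "nat \<Rightarrow> (nat \<Rightarrow> real) \<Rightarrow> nat \<Rightarrow> real" where
  "dyad_proj d x = (\<lambda>i. if i \<in> {1..(2::nat)^d} then x i else 0)"

lemma dyad_proj_in_dyad_dom: "dyad_proj d x \<in> dyad_dom d"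
  by (simp add: dyad_proj_def dyad_dom_def)

lemma dyad_proj_inside: "i \<in> {1..(2::nat)^d} \<Longrightarrow> dyad_proj d x i = x i"
  by (simp add: dyad_proj_def)

lemma dyad_proj_outside: "i \<notin> {1..(2::nat)^d} \<Longrightarrow> dyad_proj d x i = 0"
  by (auto simp: dyad_proj_def)

lemma dyad_proj_restrict: "dyad_proj d (restrict x {1..(2::nat)^d}) = dyad_proj d x"
  by (auto simp: dyad_proj_def)

lemma dyad_proj_eq: "x \<in> dyad_dom d \<Longrightarrow> dyad_proj d x = x"
  by (auto simp: dyad_proj_def dyad_dom_def)

lemma continuous_on_dyad_proj: "continuous_on UNIV (dyad_proj d)"
proof (rule continuous_on_coordinatewise_then_product)
  fix i
  show "continuous_on UNIV (\<lambda>x. dyad_proj d x i)"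
    by (cases "i \<in> {1..(2::nat)^d}") (simp_all add: dyad_proj_inside dyad_proj_outside)
qed

lemma measurable_dyad_proj_PiM: "dyad_proj d \<in> borel_measurable (\<Pi>\<^sub>M i\<in>{1..(2::nat)^d}. borel)"
proof (rule measurable_coordinatewise_then_product)
  fix i
  show "(\<lambda>x. dyad_proj d x i) \<in> borel_measurable (\<Pi>\<^sub>M i\<in>{1..(2::nat)^d}. borel)"
    by (cases "i \<in> {1..(2::nat)^d}")
      (simp_all add: dyad_proj_inside dyad_proj_outside measurable_component_singleton)
qed

lemma bcont_comp_dyad_proj_measurable:
  assumes "bcont d f" shows "(\<lambda>x. f (dyad_proj d x)) \<in> borel_measurable borel"
proof -
  have "continuous_on (dyad_dom d) f" using assms by (simp add: bcont_def)
  then have "continuous_on UNIV (\<lambda>x. f (dyad_proj d x))"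
    using continuous_on_compose2[OF _ continuous_on_dyad_proj] dyad_proj_in_dyad_dom by blast
  then show ?thesis by (rule borel_measurable_continuous_onI)
qed

lemma bcont_comp_measurable:
  assumes f: "bcont d f" and Y: "Y \<in> borel_measurable M" and dom: "\<And>\<omega>. Y \<omega> \<in> dyad_dom d"
  shows "(\<lambda>\<omega>. f (Y \<omega>)) \<in> borel_measurable M"
proof -
  have "(\<lambda>\<omega>. f (dyad_proj d (Y \<omega>))) \<in> borel_measurable M"
    using measurable_comp[OF Y bcont_comp_dyad_proj_measurable[OF f]] by (simp add: comp_def)
  then show ?thesis by (simp add: dyad_proj_eq[OF dom])
qed

lemma bcont_permute:
  assumes \<pi>: "\<pi> permutes {1..(2::nat)^d}" and f: "bcont d f"
  shows "bcont d (\<lambda>x. f (\<lambda>k. x (\<pi> k)))"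
  unfolding bcont_def
proof
  have "continuous_on (dyad_dom d) (\<lambda>x k. x (\<pi> k))"
    by (intro continuous_on_coordinatewise_then_product continuous_on_subset[OF continuous_on_product_coordinates]) simp
  then show "continuous_on (dyad_dom d) (\<lambda>x. f (\<lambda>k. x (\<pi> k)))"
    using continuous_on_compose2 f permute_in_dyad_dom[OF \<pi>] unfolding bcont_def by blast
  have "(\<lambda>x. f (\<lambda>k. x (\<pi> k))) ` dyad_dom d \<subseteq> f ` dyad_dom d"
    using permute_in_dyad_dom[OF \<pi>] by auto
  then show "bounded ((\<lambda>x. f (\<lambda>k. x (\<pi> k))) ` dyad_dom d)"
    using f bounded_subset unfolding bcont_def by blast
qed

lemma distr_permuted_dyad_incr:
  assumes levy: "levy_process M X" and \<pi>: "\<pi> permutes {1..(2::nat)^d}"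
  shows "distr M borel (\<lambda>\<omega> k. dyad_incr X d \<omega> (\<pi> k)) =
    distr (\<Pi>\<^sub>M k\<in>{1..(2::nat)^d}. distr M borel (X (1 / 2^d))) borel (dyad_proj d)"
proof -
  interpret prob_space M using levy by (simp add: levy_process_def)
  let ?I = "{1..(2::nat)^d}" and ?Y = "\<lambda>k \<omega>. dyad_incr X d \<omega> (\<pi> k)"
  have Y: "random_variable borel (?Y k)" for k using dyad_incr_component_measurable[OF levy] .
  then have "distr M (\<Pi>\<^sub>M k\<in>?I. borel) (\<lambda>\<omega>. \<lambda>k\<in>?I. ?Y k \<omega>) = (\<Pi>\<^sub>M k\<in>?I. distr M borel (?Y k))"
    using indep_vars_iff_distr_eq_PiM[of ?I ?Y "\<lambda>_. borel"] indep_vars_permuted_dyad_incr[OF levy \<pi>]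
    by simp
  also have "\<dots> = (\<Pi>\<^sub>M k\<in>?I. distr M borel (X (1 / 2^d)))"
    using distr_dyad_incr_component[OF levy] permutes_in_image[OF \<pi>] by (intro PiM_cong) auto
  finally have law: "distr M (\<Pi>\<^sub>M k\<in>?I. borel) (\<lambda>\<omega>. \<lambda>k\<in>?I. ?Y k \<omega>) = (\<Pi>\<^sub>M k\<in>?I. distr M borel (X (1 / 2^d)))" .
  have "(\<lambda>k. ?Y k \<omega>) = dyad_proj d (\<lambda>k\<in>?I. ?Y k \<omega>)" for \<omega>
    unfolding dyad_proj_restrict
    by (rule dyad_proj_eq[OF permute_in_dyad_dom[OF \<pi> dyad_incr_in_dyad_dom], symmetric])
  then have "(\<lambda>\<omega> k. ?Y k \<omega>) = dyad_proj d \<circ> (\<lambda>\<omega>. \<lambda>k\<in>?I. ?Y k \<omega>)"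
    by (simp add: comp_def)
  moreover have "(\<lambda>\<omega>. \<lambda>k\<in>?I. ?Y k \<omega>) \<in> measurable M (\<Pi>\<^sub>M k\<in>?I. borel)"
    using Y by (intro measurable_restrict) auto
  ultimately show ?thesis
    using distr_distr[OF measurable_dyad_proj_PiM] law by metis
qed

lemma distr_permuted_dyad_incr_eq:
  assumes levy: "levy_process M X" and \<pi>: "\<pi> permutes {1..(2::nat)^d}"
  shows "distr M borel (\<lambda>\<omega> k. dyad_incr X d \<omega> (\<pi> k)) = distr M borel (dyad_incr X d)"
  using distr_permuted_dyad_incr[OF levy \<pi>] distr_permuted_dyad_incr[OF levy permutes_id] by (simp add: id_def)

section \<open>Refining a dyadic interval exchange\<close>

lemma g_perm_on_dyadic_interval:
  assumes k: "k \<in> {1..(2::nat)^d}" and t: "t \<in> {(real k - 1) / 2^d <.. real k / 2^d}"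
  shows "g_perm d \<pi> t = t + (real (\<pi> k) - real k) / 2^d"
proof -
  have lo: "real k - 1 < t * 2^d" and hi: "t * 2^d \<le> real k" using t by (auto simp: field_simps)
  have "real k \<le> 2^d" "1 \<le> real k" using k by simp_all
  then have "0 < t * 2^d" "t * 2^d \<le> 1 * 2^d" using lo hi by linarith+
  then have "t \<in> {0<..1}" by (auto simp: zero_less_mult_iff mult_le_cancel_right)
  moreover have "\<lceil>t * 2^d\<rceil> = int k" using lo hi by (simp add: ceiling_eq_iff)
  ultimately show ?thesis by (simp add: g_perm_def Let_def diff_divide_distrib)
qed

lemma refined_index_in_range:
  assumes "k \<in> {1..(2::nat)^d}" and "j < 2^m"
  shows "(k-1)*2^m + Suc j \<in> {1..(2::nat)^(d+m)}"
proof -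
  have "(k-1)*2^m + Suc j \<le> (k-1)*2^m + 2^m" using assms(2) by simp
  also have "\<dots> = k * 2^m" using assms(1) by (cases k) auto
  also have "\<dots> \<le> 2^d * 2^m" using assms(1) by simp
  finally show ?thesis by (simp add: power_add)
qed

text \<open>The dyadic point i/2^e with i = (k-1) 2^(e-d) + j + 1 is the right endpoint of the level-e interval
  number i and lies in the level-d interval number k; comparing the translations by which
  g_perm e \<pi>e and g_perm d \<pi>d move this point determines \<pi>e i.\<close>

lemma g_perm_refinement:
  assumes de: "d \<le> e" and g: "g_perm d \<pi>d = g_perm e \<pi>e"
    and \<pi>d: "\<pi>d permutes {1..(2::nat)^d}"
    and k: "k \<in> {1..(2::nat)^d}" and j: "j < 2^(e-d)"
  shows "\<pi>e ((k-1)*2^(e-d) + Suc j) = (\<pi>d k - 1)*2^(e-d) + Suc j"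
proof -
  define m where "m = e - d"
  define i where "i = (k-1)*2^m + Suc j"
  have e: "(2::real)^e = 2^d * 2^m" by (simp add: m_def de flip: power_add)
  have "real j + 1 \<le> 2^m" using j unfolding m_def
    by (metis Suc_leI of_nat_Suc of_nat_le_iff of_nat_numeral of_nat_power add.commute)
  moreover have ri: "real i = (real k - 1) * 2^m + real j + 1" using k by (simp add: i_def)
  ultimately have "real k - 1 < real i / 2^m" "real i / 2^m \<le> real k" by (simp_all add: field_simps)
  moreover have "real i / 2^e = (real i / 2^m) / 2^d" by (simp add: e)
  ultimately have in_d: "real i / 2^e \<in> {(real k - 1) / 2^d <.. real k / 2^d}"
    by (simp del: divide_divide_eq_left add: divide_strict_right_mono divide_right_mono)
  have "i \<in> {1..(2::nat)^e}"
    using refined_index_in_range[OF k, of j m] j by (simp add: i_def m_def de)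
  then have "g_perm e \<pi>e (real i / 2^e) = real i / 2^e + (real (\<pi>e i) - real i) / 2^e"
    by (intro g_perm_on_dyadic_interval) (auto simp: field_simps)
  moreover have "g_perm d \<pi>d (real i / 2^e) = real i / 2^e + (real (\<pi>d k) - real k) / 2^d"
    using g_perm_on_dyadic_interval[OF k in_d] .
  ultimately have "(real (\<pi>e i) - real i) / 2^e = ((real (\<pi>d k) - real k) * 2^m) / 2^e"
    using g unfolding e by simp
  then have "real (\<pi>e i) = real i + (real (\<pi>d k) - real k) * 2^m"
    by simp
  also have "\<dots> = real ((\<pi>d k - 1)*2^m + Suc j)"
  proof -
    have "\<pi>d k \<in> {1..2^d}" using permutes_in_image[OF \<pi>d] k by simp
    then have "1 \<le> \<pi>d k" by simp
    then show ?thesis using ri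
      unfolding of_nat_add of_nat_mult of_nat_diff[OF \<open>1 \<le> \<pi>d k\<close>] by (simp add: algebra_simps)
  qed
  finally have "\<pi>e i = (\<pi>d k - 1)*2^m + Suc j" by (simp only: of_nat_eq_iff)
  then show ?thesis by (simp add: i_def m_def)
qed

definition dyad_coarsen :: "nat \<Rightarrow> nat \<Rightarrow> (nat \<Rightarrow> real) \<Rightarrow> nat \<Rightarrow> real" where
  "dyad_coarsen d m y = (\<lambda>k. if k \<in> {1..(2::nat)^d} then (\<Sum>i<(2::nat)^m. y ((k-1)*2^m + Suc i)) else 0)"

lemma dyad_coarsen_in_dyad_dom: "dyad_coarsen d m y \<in> dyad_dom d"
  by (simp add: dyad_coarsen_def dyad_dom_def)

lemma continuous_on_dyad_coarsen: "continuous_on UNIV (dyad_coarsen d m)"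
proof (rule continuous_on_coordinatewise_then_product)
  fix k
  show "continuous_on UNIV (\<lambda>y. dyad_coarsen d m y k)"
    by (cases "k \<in> {1..(2::nat)^d}") (auto simp: dyad_coarsen_def intro!: continuous_on_sum)
qed

lemma dyad_coarsen_dyad_incr:
  assumes de: "d \<le> e"
  shows "dyad_coarsen d (e-d) (dyad_incr X e \<omega>) = dyad_incr X d \<omega>"
proof
  fix k
  define m where "m = e - d"
  have e: "e = d + m" using de m_def by simp
  show "dyad_coarsen d (e-d) (dyad_incr X e \<omega>) k = dyad_incr X d \<omega> k"
  proof (cases "k \<in> {1..(2::nat)^d}")
    case False then show ?thesis by (auto simp: dyad_coarsen_def dyad_incr_def)
  next
    case True
    define a where "a n = X (real ((k-1)*2^m + n) / 2^e) \<omega>" for n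
    have "(k-1)*2^m + Suc i \<in> {1..(2::nat)^e}" if "i < 2^m" for i
      using refined_index_in_range[OF True that] by (simp add: e)
    then have "dyad_coarsen d m (dyad_incr X e \<omega>) k = (\<Sum>i<(2::nat)^m. a (Suc i) - a i)"
      using True by (auto simp: dyad_coarsen_def dyad_incr_def a_def intro!: sum.cong)
    also have "\<dots> = a (2^m) - a 0" by (rule sum_lessThan_telescope)
    also have "\<dots> = dyad_incr X d \<omega> k"
    proof -
      have "real ((k-1)*2^m + 2^m) / (2::real)^e = real k / 2^d"
        "real ((k-1)*2^m + 0) / (2::real)^e = (real k - 1) / 2^d"
        using True by (simp_all add: e power_add field_simps)
      then show ?thesis using True by (simp add: a_def dyad_incr_def)
    qed
    finally show ?thesis by (simp add: m_def)
  qed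
qed

lemma dyad_coarsen_permute:
  assumes de: "d \<le> e" and g: "g_perm d \<pi>d = g_perm e \<pi>e"
    and \<pi>d: "\<pi>d permutes {1..(2::nat)^d}"
  shows "dyad_coarsen d (e-d) (\<lambda>k. y (\<pi>e k)) = (\<lambda>k. dyad_coarsen d (e-d) y (\<pi>d k))"
proof
  fix k
  show "dyad_coarsen d (e-d) (\<lambda>k. y (\<pi>e k)) k = dyad_coarsen d (e-d) y (\<pi>d k)"
  proof (cases "k \<in> {1..(2::nat)^d}")
    case False
    then show ?thesis using permutes_not_in[OF \<pi>d] by (auto simp: dyad_coarsen_def)
  next
    case True
    then have "\<pi>d k \<in> {1..(2::nat)^d}" using permutes_in_image[OF \<pi>d] by blast
    then show ?thesis using True g_perm_refinement[OF de g \<pi>d True]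
      unfolding dyad_coarsen_def by (auto intro!: sum.cong)
  qed
qed

lemma AE_eq_permuted_dyad_incr:
  assumes levy: "levy_process M X" and de: "d \<le> e"
    and \<pi>d: "\<pi>d permutes {1..(2::nat)^d}" and \<pi>e: "\<pi>e permutes {1..(2::nat)^e}"
    and g: "g_perm d \<pi>d = g_perm e \<pi>e" and f: "bcont d f" and f': "bcont e f'"
    and AE: "AE \<omega> in M. f (dyad_incr X d \<omega>) = f' (dyad_incr X e \<omega>)"
  shows "AE \<omega> in M. f' (\<lambda>k. dyad_incr X e \<omega> (\<pi>e k)) = f (\<lambda>k. dyad_incr X d \<omega> (\<pi>d k))"
proof -
  define h1 where "h1 y = f (dyad_coarsen d (e-d) y)" for y
  define h2 where "h2 y = f' (dyad_proj e y)" for y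
  have "continuous_on UNIV h1"
    using f continuous_on_compose2[OF _ continuous_on_dyad_coarsen] dyad_coarsen_in_dyad_dom
    unfolding h1_def bcont_def by blast
  then have h1: "h1 \<in> borel_measurable borel" by (rule borel_measurable_continuous_onI)
  have h2: "h2 \<in> borel_measurable borel" unfolding h2_def by (rule bcont_comp_dyad_proj_measurable[OF f'])
  have "AE \<omega> in M. h1 (dyad_incr X e \<omega>) = h2 (dyad_incr X e \<omega>)"
    using AE by (simp add: h1_def h2_def dyad_coarsen_dyad_incr[OF de] dyad_proj_eq[OF dyad_incr_in_dyad_dom])
  then have "AE \<omega> in M. h1 (\<lambda>k. dyad_incr X e \<omega> (\<pi>e k)) = h2 (\<lambda>k. dyad_incr X e \<omega> (\<pi>e k))"
    using AE_eq_transfer_distr[OF distr_permuted_dyad_incr_eq[OF levy \<pi>e, symmetric]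
        dyad_incr_measurable[OF levy] permuted_dyad_incr_measurable[OF levy] h1 h2] by simp
  moreover have "h1 (\<lambda>k. dyad_incr X e \<omega> (\<pi>e k)) = f (\<lambda>k. dyad_incr X d \<omega> (\<pi>d k))" for \<omega>
    unfolding h1_def dyad_coarsen_permute[OF de g \<pi>d] dyad_coarsen_dyad_incr[OF de] ..
  moreover have "h2 (\<lambda>k. dyad_incr X e \<omega> (\<pi>e k)) = f' (\<lambda>k. dyad_incr X e \<omega> (\<pi>e k))" for \<omega>
    unfolding h2_def dyad_proj_eq[OF permute_in_dyad_dom[OF \<pi>e dyad_incr_in_dyad_dom]] ..
  ultimately show ?thesis by auto
qed

lemma distr_bcont_permuted_dyad_incr:
  assumes levy: "levy_process M X" and \<pi>: "\<pi> permutes {1..(2::nat)^d}" and f: "bcont d f"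
  shows "distr M borel (\<lambda>\<omega>. f (\<lambda>k. dyad_incr X d \<omega> (\<pi> k))) = distr M borel (\<lambda>\<omega>. f (dyad_incr X d \<omega>))"
proof -
  define h where "h y = f (dyad_proj d y)" for y
  have h: "h \<in> borel_measurable borel" unfolding h_def by (rule bcont_comp_dyad_proj_measurable[OF f])
  have "(\<lambda>\<omega>. f (\<lambda>k. dyad_incr X d \<omega> (\<pi> k))) = h \<circ> (\<lambda>\<omega> k. dyad_incr X d \<omega> (\<pi> k))"
    "(\<lambda>\<omega>. f (dyad_incr X d \<omega>)) = h \<circ> dyad_incr X d"
    by (simp_all add: h_def comp_def dyad_proj_eq[OF permute_in_dyad_dom[OF \<pi> dyad_incr_in_dyad_dom]]
        dyad_proj_eq[OF dyad_incr_in_dyad_dom])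
  then show ?thesis
    using distr_distr[OF h permuted_dyad_incr_measurable[OF levy]] distr_distr[OF h dyad_incr_measurable[OF levy]]
      distr_permuted_dyad_incr_eq[OF levy \<pi>] by metis
qed

theorem lemma2p4:
  fixes M :: "'a measure" and X :: "real \<Rightarrow> 'a \<Rightarrow> real" and g :: "real \<Rightarrow> real"
  assumes levy: "levy_process M X"
    and compl: "measure_complete M"
    and g: "g \<in> G_dyad"
  shows
    \<comment> \<open>(1) well-definedness of T_g on H^{X,d}\<close>
    "(\<forall>d \<pi> f1 f2. deg g \<le> d \<longrightarrow> \<pi> permutes {1..(2::nat)^d} \<longrightarrow> g = g_perm d \<pi> \<longrightarrow>
        bcont d f1 \<longrightarrow> bcont d f2 \<longrightarrow>
        (AE \<omega> in M. f1 (dyad_incr X d \<omega>) = f2 (dyad_incr X d \<omega>)) \<longrightarrow>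
        (AE \<omega> in M. f1 (\<lambda>k. dyad_incr X d \<omega> (\<pi> k)) = f2 (\<lambda>k. dyad_incr X d \<omega> (\<pi> k))))
   \<and> \<comment> \<open>(2) compatibility: T_{g_{pi_e}} restricted to H^{X,d} is T_{g_{pi_d}}\<close>
    (\<forall>d e \<pi>d \<pi>e f f'. deg g \<le> d \<longrightarrow> d \<le> e \<longrightarrow>
        \<pi>d permutes {1..(2::nat)^d} \<longrightarrow> \<pi>e permutes {1..(2::nat)^e} \<longrightarrow>
        g = g_perm d \<pi>d \<longrightarrow> g = g_perm e \<pi>e \<longrightarrow>
        bcont d f \<longrightarrow> bcont e f' \<longrightarrow>
        (AE \<omega> in M. f (dyad_incr X d \<omega>) = f' (dyad_incr X e \<omega>)) \<longrightarrow>
        (AE \<omega> in M. f' (\<lambda>k. dyad_incr X e \<omega> (\<pi>e k)) = f (\<lambda>k. dyad_incr X d \<omega> (\<pi>d k))))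
   \<and> \<comment> \<open>(3) F and T_g F have the same law; T_g is a linear isometry in L_2\<close>
    (\<forall>d \<pi> f. deg g \<le> d \<longrightarrow> \<pi> permutes {1..(2::nat)^d} \<longrightarrow> g = g_perm d \<pi> \<longrightarrow> bcont d f \<longrightarrow>
        bcont d (\<lambda>x. f (\<lambda>k. x (\<pi> k))) \<and>
        distr M borel (\<lambda>\<omega>. f (\<lambda>k. dyad_incr X d \<omega> (\<pi> k))) = distr M borel (\<lambda>\<omega>. f (dyad_incr X d \<omega>)) \<and>
        (\<integral>\<omega>. (f (\<lambda>k. dyad_incr X d \<omega> (\<pi> k)))\<^sup>2 \<partial>M) = (\<integral>\<omega>. (f (dyad_incr X d \<omega>))\<^sup>2 \<partial>M))"
\<comment> \<open>The statements hold for every permutation.\<close>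
proof (intro conjI allI impI)
  fix d \<pi> f1 f2
  assume "\<pi> permutes {1..(2::nat)^d}" "bcont d f1" "bcont d f2"
    "AE \<omega> in M. f1 (dyad_incr X d \<omega>) = f2 (dyad_incr X d \<omega>)"
  from AE_eq_permuted_dyad_incr[OF levy order_refl this(1) this(1) refl this(2-4)]
  show "AE \<omega> in M. f1 (\<lambda>k. dyad_incr X d \<omega> (\<pi> k)) = f2 (\<lambda>k. dyad_incr X d \<omega> (\<pi> k))"
    by auto
next
  fix d e \<pi>d \<pi>e f f'
  assume "d \<le> e" "\<pi>d permutes {1..(2::nat)^d}" "\<pi>e permutes {1..(2::nat)^e}"
    and "g = g_perm d \<pi>d" "g = g_perm e \<pi>e"
    and "bcont d f" "bcont e f'" "AE \<omega> in M. f (dyad_incr X d \<omega>) = f' (dyad_incr X e \<omega>)"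
  then show "AE \<omega> in M. f' (\<lambda>k. dyad_incr X e \<omega> (\<pi>e k)) = f (\<lambda>k. dyad_incr X d \<omega> (\<pi>d k))"
    using AE_eq_permuted_dyad_incr[OF levy] by simp
next
  fix d \<pi> f
  assume \<pi>: "\<pi> permutes {1..(2::nat)^d}" and f: "bcont d f"
  show "bcont d (\<lambda>x. f (\<lambda>k. x (\<pi> k)))" by (rule bcont_permute[OF \<pi> f])
  show law: "distr M borel (\<lambda>\<omega>. f (\<lambda>k. dyad_incr X d \<omega> (\<pi> k))) = distr M borel (\<lambda>\<omega>. f (dyad_incr X d \<omega>))"
    by (rule distr_bcont_permuted_dyad_incr[OF levy \<pi> f])
  show "(\<integral>\<omega>. (f (\<lambda>k. dyad_incr X d \<omega> (\<pi> k)))\<^sup>2 \<partial>M) = (\<integral>\<omega>. (f (dyad_incr X d \<omega>))\<^sup>2 \<partial>M)"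
    using law by (intro integral_square_eq_if_distr_eq bcont_comp_measurable[OF f]
        permuted_dyad_incr_measurable[OF levy] dyad_incr_measurable[OF levy]
        permute_in_dyad_dom[OF \<pi>] dyad_incr_in_dyad_dom)
qed

end
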